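(* Let $p$ be an odd prime and let $\Phi_{p^2-1}(x)\in\mathbb{Z}[x]$ be the $(p^2-1)$-th cyclotomic polynomial. Let $$F(x)=\prod_{1\le s<t\le (p^2-1)/2}(x^{2t}-x^{2s}),\qquad T(x)=(-1)^{\frac{p^2+7}{8}}\left(\frac{p^2-1}{2}\right)^{\frac{p^2-1}{4}}x^{\frac{p^2-1}{4}}.$$ Then $\Phi_{p^2-1}(x)$ divides $F(x)-T(x)$ in $\mathbb{Z}[x]$. *)

theory Defs
  imports Complex_Main "HOL-Computational_Algebra.Polynomial"
begin

definition cyclotomic_poly :: "nat \<Rightarrow> int poly" where
  "cyclotomic_poly n = (THE q. map_poly of_int q =
     (\<Prod>k\<in>{k. 1 \<le> k \<and> k \<le> n \<and> coprime k n}. [:- cis (2 * pi * real k / real n), 1:]))"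

end

theory Submission
  imports Defs "HOL-Computational_Algebra.Fundamental_Theorem_Algebra"
begin

text \<open>Write m = (p^2 - 1)/2 = 4a and let \<zeta> = cis \<theta> be a primitive 2m-th root of unity.
  Each factor \<zeta>^(2t) - \<zeta>^(2s) equals \<zeta>^(s+t) \<cdot> 2i \<cdot> sin ((t - s) \<theta>), so F(\<zeta>) is
  \<zeta>^(\<Sum>(s+t)) (2i)^c times a real number R, c being the number of pairs. Since \<zeta>^m = -1,
  the sine factors for the differences d and m - d agree; pairing them shows R \<ge> 0 because
  m/2 is even. The modulus of F(\<zeta>) is the square root of the discriminant m^m of x^m - 1, and
  reducing the exponent of \<zeta> modulo 2m and that of i modulo 4 gives F(\<zeta>) = T(\<zeta>). The
  cyclotomic polynomial is monic and its complex roots are exactly the primitive roots, all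
  simple, so F - T is divisible by it in \<complex>[x] and hence in \<int>[x].\<close>

section \<open>Integer polynomials in characteristic zero\<close>

lemma map_poly_of_int_add [simp]:
  "map_poly (of_int :: int \<Rightarrow> 'a::comm_ring_1) (p + q) = map_poly of_int p + map_poly of_int q"
  by (intro poly_eqI) (simp add: coeff_map_poly)

lemma map_poly_of_int_diff [simp]:
  "map_poly (of_int :: int \<Rightarrow> 'a::comm_ring_1) (p - q) = map_poly of_int p - map_poly of_int q"
  by (intro poly_eqI) (simp add: coeff_map_poly)

lemma map_poly_of_int_mult [simp]:
  "map_poly (of_int :: int \<Rightarrow> 'a::comm_ring_1) (p * q) = map_poly of_int p * map_poly of_int q"
  by (intro poly_eqI) (simp add: coeff_map_poly coeff_mult)

lemma map_poly_of_int_prod: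
  "map_poly (of_int :: int \<Rightarrow> 'a::comm_ring_1) (prod f A) = (\<Prod>x\<in>A. map_poly of_int (f x))"
  by (induction A rule: infinite_finite_induct) simp_all

lemma map_poly_of_int_smult [simp]:
  "map_poly (of_int :: int \<Rightarrow> 'a::comm_ring_1) (smult c p) = smult (of_int c) (map_poly of_int p)"
  by (intro poly_eqI) (simp add: coeff_map_poly)

lemma map_poly_of_int_monom [simp]:
  "map_poly (of_int :: int \<Rightarrow> 'a::comm_ring_1) (monom c n) = monom (of_int c) n"
  by (simp add: map_poly_monom)

lemma map_poly_of_int_eq_iff [simp]:
  "map_poly (of_int :: int \<Rightarrow> 'a::ring_char_0) p = map_poly of_int q \<longleftrightarrow> p = q"
  by (auto simp: poly_eq_iff coeff_map_poly)

lemma map_poly_of_int_eq_0_iff [simp]: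
  "map_poly (of_int :: int \<Rightarrow> 'a::ring_char_0) p = 0 \<longleftrightarrow> p = 0"
  using map_poly_of_int_eq_iff[of p 0] by (simp del: map_poly_of_int_eq_iff)

lemma degree_map_poly_of_int [simp]:
  "degree (map_poly (of_int :: int \<Rightarrow> 'a::ring_char_0) p) = degree p"
  by (rule degree_map_poly) simp

lemma coeff_map_poly_of_int [simp]:
  "coeff (map_poly (of_int :: int \<Rightarrow> 'a::ring_1) p) n = of_int (coeff p n)"
  by (simp add: coeff_map_poly)

lemma map_poly_of_int_dvd_imp_dvd:
  fixes f g :: "int poly"
  assumes monic: "lead_coeff g = 1"
    and dvd: "(map_poly of_int g :: 'a::{idom,ring_char_0} poly) dvd map_poly of_int f"
  shows "g dvd f"
proof -
  have "g \<noteq> 0" using monic by auto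
  obtain q r where qr: "pseudo_divmod f g = (q, r)" by fastforce
  with pseudo_divmod[OF \<open>g \<noteq> 0\<close> qr] monic
  have f: "f = g * q + r" and r: "r = 0 \<or> degree r < degree g" by simp_all
  have "(map_poly of_int g :: 'a poly) dvd map_poly of_int r"
    using dvd unfolding f by (simp add: dvd_add_right_iff)
  with r have "r = 0"
    using dvd_imp_degree_le[of "map_poly of_int g :: 'a poly" "map_poly of_int r"] by fastforce
  with f show ?thesis by simp
qed

lemma prod_linear_factors_dvd:
  fixes f :: "'a::idom poly"
  assumes "finite S" and "\<And>z. z \<in> S \<Longrightarrow> poly f z = 0"
  shows "(\<Prod>z\<in>S. [:-z, 1:]) dvd f"
  using assms
proof (induction S arbitrary: f rule: finite_induct)
  case (insert a S)
  from insert.prems have "[:-a, 1:] dvd f" by (simp add: poly_eq_0_iff_dvd)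
  then obtain g where f: "f = [:-a, 1:] * g" by (elim dvdE)
  have "poly g z = 0" if "z \<in> S" for z
    using insert.prems[of z] that insert.hyps(2) by (auto simp: f)
  with insert.IH have "(\<Prod>z\<in>S. [:-z, 1:]) dvd g" by blast
  then show ?case
    unfolding f prod.insert[OF insert.hyps] by (rule mult_dvd_mono[OF dvd_refl])
qed simp

section \<open>Primitive roots of unity\<close>

definition primitive_roots_unity :: "nat \<Rightarrow> complex set" where
  "primitive_roots_unity n = {z. \<forall>j. z ^ j = 1 \<longleftrightarrow> n dvd j}"

lemma primitive_root_unity_power_eq_1:
  "z \<in> primitive_roots_unity n \<Longrightarrow> z ^ j = 1 \<longleftrightarrow> n dvd j"
  by (simp add: primitive_roots_unity_def)

lemma finite_primitive_roots_unity: "n > 0 \<Longrightarrow> finite (primitive_roots_unity n)"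
  by (rule finite_subset[OF _ finite_roots_unity[of n]])
     (auto simp: primitive_root_unity_power_eq_1)

lemma primitive_roots_unity_disjoint:
  assumes "d \<noteq> d'"
  shows "primitive_roots_unity d \<inter> primitive_roots_unity d' = {}"
proof -
  have "d = d'" if "z \<in> primitive_roots_unity d" "z \<in> primitive_roots_unity d'" for z
    using that[THEN primitive_root_unity_power_eq_1] by (metis dvd_antisym dvd_refl)
  with assms show ?thesis by blast
qed

lemma roots_unity_eq_Union_primitive:
  assumes "n > 0"
  shows "{z::complex. z ^ n = 1} = (\<Union>d\<in>{d. d dvd n}. primitive_roots_unity d)"
proof (intro equalityI subsetI)
  fix z :: complex assume "z \<in> {z. z ^ n = 1}"
  then have "z ^ n = 1" by simp
  define d where "d = (LEAST j. 0 < j \<and> z ^ j = 1)"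
  from \<open>z ^ n = 1\<close> \<open>n > 0\<close> have d: "0 < d" "z ^ d = 1"
    using LeastI[of "\<lambda>j. 0 < j \<and> z ^ j = 1" n] by (simp_all add: d_def)
  have "z ^ j = 1 \<longleftrightarrow> d dvd j" for j
  proof -
    have "z ^ j = (z ^ d) ^ (j div d) * z ^ (j mod d)"
      by (simp flip: power_mult power_add)
    then have "z ^ j = z ^ (j mod d)"
      using d(2) by simp
    moreover have "z ^ (j mod d) \<noteq> 1" if "j mod d \<noteq> 0"
      using not_less_Least[of "j mod d" "\<lambda>j. 0 < j \<and> z ^ j = 1"] that d(1)
      unfolding d_def[symmetric] by auto
    ultimately show ?thesis using d(2) by (auto simp: dvd_eq_mod_eq_0)
  qed
  with \<open>z ^ n = 1\<close> show "z \<in> (\<Union>d\<in>{d. d dvd n}. primitive_roots_unity d)"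
    by (auto simp: primitive_roots_unity_def)
qed (auto dest: primitive_root_unity_power_eq_1[where j = n])

lemma cis_2pi_mult_eq_1_iff: "cis (2 * pi * x) = 1 \<longleftrightarrow> x \<in> \<int>"
proof
  assume "cis (2 * pi * x) = 1"
  then have "cos (2 * pi * x) = 1" by (simp add: complex_eq_iff)
  then obtain N :: int where "2 * pi * x = of_int N * 2 * pi" by (auto simp: cos_one_2pi_int)
  then show "x \<in> \<int>" by simp
qed simp

lemma cis_root_power_eq_1_iff:
  assumes "n > 0"
  shows "cis (2 * pi * real k / real n) ^ j = 1 \<longleftrightarrow> n dvd k * j"
proof -
  have "cis (2 * pi * real k / real n) ^ j = cis (2 * pi * (of_int (int (k * j)) / of_int (int n)))"
    by (simp add: DeMoivre mult_ac)
  then show ?thesis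
    using assms by (simp only: cis_2pi_mult_eq_1_iff of_int_div_of_int_in_Ints_iff)
      (simp flip: of_nat_mult)
qed

lemma bij_betw_cis_roots_unity:
  assumes "n > 0"
  shows "bij_betw (\<lambda>k. cis (2 * pi * real k / real n)) {1..n} {z. z ^ n = 1}"
proof -
  have "k mod n = (if k = n then 0 else k)" if "k \<in> {1..n}" for k
    using that by auto
  then have "bij_betw (\<lambda>k. k mod n) {1..n} {..<n}"
    by (intro bij_betw_byWitness[where f' = "\<lambda>j. if j = 0 then n else j"]) auto
  from bij_betw_trans[OF this bij_betw_roots_unity[OF assms]] show ?thesis
    by (rule bij_betw_cong[THEN iffD1, rotated])
       (use assms in \<open>auto simp: le_less\<close>)
qed

lemma cis_root_in_primitive_roots_unity_iff:
  assumes "n > 0"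
  shows "cis (2 * pi * real k / real n) \<in> primitive_roots_unity n \<longleftrightarrow> coprime k n"
proof
  assume prim: "cis (2 * pi * real k / real n) \<in> primitive_roots_unity n"
  define g where "g = gcd k n"
  have "n dvd k * (n div g)"
    by (metis g_def dvd_div_mult dvd_triv_right gcd_dvd1 gcd_dvd2 mult.commute)
  then have "n dvd n div g"
    using prim assms by (simp add: primitive_root_unity_power_eq_1 flip: cis_root_power_eq_1_iff)
  moreover have "n div g > 0"
    using assms by (simp add: g_def div_greater_zero_iff gcd_le2_nat)
  ultimately have "n div g = n"
    by (meson dvd_imp_le div_le_dividend le_antisym)
  then have "g = 1"
    using assms by (simp add: div_eq_dividend_iff)
  then show "coprime k n" by (simp add: g_def coprime_iff_gcd_eq_1)
next
  assume "coprime k n"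
  then show "cis (2 * pi * real k / real n) \<in> primitive_roots_unity n"
    using assms
    by (simp add: primitive_roots_unity_def cis_root_power_eq_1_iff coprime_commute
        coprime_dvd_mult_right_iff)
qed

lemma bij_betw_primitive_roots_unity:
  assumes "n > 0"
  shows "bij_betw (\<lambda>k. cis (2 * pi * real k / real n))
           {k. 1 \<le> k \<and> k \<le> n \<and> coprime k n} (primitive_roots_unity n)"
proof (rule bij_betw_subset[OF bij_betw_cis_roots_unity[OF assms]])
  let ?f = "\<lambda>k. cis (2 * pi * real k / real n)"
  show "?f ` {k. 1 \<le> k \<and> k \<le> n \<and> coprime k n} = primitive_roots_unity n"
  proof (intro equalityI subsetI)
    fix z assume "z \<in> primitive_roots_unity n"
    then have "z \<in> ?f ` {1..n}"
      using bij_betw_imp_surj_on[OF bij_betw_cis_roots_unity[OF assms]]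
      by (auto simp: primitive_root_unity_power_eq_1)
    with \<open>z \<in> primitive_roots_unity n\<close> show "z \<in> ?f ` {k. 1 \<le> k \<and> k \<le> n \<and> coprime k n}"
      by (auto simp: cis_root_in_primitive_roots_unity_iff[OF assms])
  qed (auto simp: cis_root_in_primitive_roots_unity_iff[OF assms])
qed auto

section \<open>Cyclotomic polynomials\<close>

lemma prod_roots_unity_linear_factors:
  assumes "n > 0"
  shows "(\<Prod>z\<in>{z. z ^ n = 1}. [:-z, 1:]) = (monom 1 n - 1 :: complex poly)"
proof -
  define p where "p = (monom 1 n - 1 :: complex poly)"
  have poly_p: "poly p z = z ^ n - 1" for z
    by (simp add: p_def poly_monom)
  have "poly (pderiv p) z = of_nat n * z ^ (n - 1)" for z
    by (simp add: p_def pderiv_monom poly_monom pderiv_diff)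
  then have "rsquarefree p"
    using assms by (auto simp: rsquarefree_roots poly_p power_0_left)
  moreover have "lead_coeff p = 1"
  proof -
    have "degree p = n"
      using assms degree_add_eq_left[of "-1" "monom (1::complex) n"]
      by (simp add: p_def degree_monom_eq)
    then show ?thesis using assms by (simp add: p_def)
  qed
  ultimately have "p = (\<Prod>z | poly p z = 0. [:-z, 1:])"
    using complex_poly_decompose_rsquarefree[of p] by simp
  also have "{z. poly p z = 0} = {z. z ^ n = 1}"
    by (simp add: poly_p)
  finally show ?thesis by (simp add: p_def)
qed

definition complex_cyclotomic_poly :: "nat \<Rightarrow> complex poly" where
  "complex_cyclotomic_poly n = (\<Prod>z\<in>primitive_roots_unity n. [:-z, 1:])"

lemma lead_coeff_complex_cyclotomic_poly [simp]: "lead_coeff (complex_cyclotomic_poly n) = 1"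
  by (simp add: complex_cyclotomic_poly_def lead_coeff_prod)

lemma prod_complex_cyclotomic_poly_divisors:
  assumes "n > 0"
  shows "(\<Prod>d | d dvd n. complex_cyclotomic_poly d) = monom 1 n - 1"
proof -
  have "(\<Prod>d | d dvd n. complex_cyclotomic_poly d)
      = (\<Prod>z\<in>(\<Union>d\<in>{d. d dvd n}. primitive_roots_unity d). [:-z, 1:])"
    unfolding complex_cyclotomic_poly_def using assms
    by (intro prod.UNION_disjoint[symmetric])
       (auto intro!: finite_primitive_roots_unity intro: Nat.gr0I,
        blast dest: primitive_roots_unity_disjoint)
  also have "\<dots> = monom 1 n - 1"
    using assms by (simp flip: roots_unity_eq_Union_primitive add: prod_roots_unity_linear_factors)
  finally show ?thesis .
qed

lemma complex_cyclotomic_poly_integral: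
  assumes "n > 0"
  shows "\<exists>q. map_poly of_int q = complex_cyclotomic_poly n"
  using assms
proof (induction n rule: less_induct)
  case (less n)
  define D where "D = {d. d dvd n} - {n}"
  have "\<exists>q. map_poly of_int q = complex_cyclotomic_poly d" if "d \<in> D" for d
    using that less.prems
    by (intro less.IH) (auto simp: D_def intro: Nat.gr0I dest: dvd_imp_le)
  then obtain Q where Q: "\<And>d. d \<in> D \<Longrightarrow> map_poly of_int (Q d) = complex_cyclotomic_poly d"
    by metis
  define q where "q = (\<Prod>d\<in>D. Q d)"
  have map_q: "map_poly of_int q = (\<Prod>d\<in>D. complex_cyclotomic_poly d)"
    by (simp add: q_def map_poly_of_int_prod Q)
  have "(of_int (lead_coeff q) :: complex) = lead_coeff (map_poly of_int q)"
    by simp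
  also have "\<dots> = 1"
    by (simp only: map_q lead_coeff_prod lead_coeff_complex_cyclotomic_poly prod.neutral_const)
  finally have "lead_coeff q = 1"
    by simp
  have "complex_cyclotomic_poly n * map_poly of_int q = map_poly of_int (monom 1 n - 1)"
    using less.prems prod.remove[of "{d. d dvd n}" n complex_cyclotomic_poly]
    by (simp add: map_q D_def prod_complex_cyclotomic_poly_divisors)
  then have "(map_poly of_int q :: complex poly) dvd map_poly of_int (monom 1 n - 1)"
    by (metis dvd_triv_right)
  with \<open>lead_coeff q = 1\<close> obtain h where "monom 1 n - 1 = q * h"
    by (elim map_poly_of_int_dvd_imp_dvd[THEN dvdE])
  with \<open>complex_cyclotomic_poly n * map_poly of_int q = _\<close> \<open>lead_coeff q = 1\<close>
  have "complex_cyclotomic_poly n = map_poly of_int h"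
    by (auto simp: mult.commute)
  then show ?case by metis
qed

lemma map_poly_of_int_cyclotomic_poly:
  assumes "n > 0"
  shows "map_poly of_int (cyclotomic_poly n) = complex_cyclotomic_poly n"
proof -
  have "(\<Prod>k\<in>{k. 1 \<le> k \<and> k \<le> n \<and> coprime k n}. [:- cis (2 * pi * real k / real n), 1:])
      = complex_cyclotomic_poly n"
    unfolding complex_cyclotomic_poly_def
    by (rule prod.reindex_bij_betw[OF bij_betw_primitive_roots_unity[OF assms]])
  moreover obtain q where q: "map_poly of_int q = complex_cyclotomic_poly n"
    using complex_cyclotomic_poly_integral[OF assms] by blast
  ultimately have "cyclotomic_poly n = q"
    unfolding cyclotomic_poly_def
    by (intro the_equality) (simp_all add: q flip: map_poly_of_int_eq_iff[where 'a = complex])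
  with q show ?thesis by simp
qed

lemma lead_coeff_cyclotomic_poly:
  assumes "n > 0"
  shows "lead_coeff (cyclotomic_poly n) = 1"
proof -
  have "(of_int (lead_coeff (cyclotomic_poly n)) :: complex)
      = lead_coeff (map_poly of_int (cyclotomic_poly n))"
    by simp
  also have "\<dots> = 1"
    by (simp only: map_poly_of_int_cyclotomic_poly[OF assms] lead_coeff_complex_cyclotomic_poly)
  finally show ?thesis
    by simp
qed

lemma cyclotomic_poly_dvdI:
  assumes "n > 0" and "\<And>z. z \<in> primitive_roots_unity n \<Longrightarrow> poly (map_poly of_int f) z = 0"
  shows "cyclotomic_poly n dvd f"
proof (rule map_poly_of_int_dvd_imp_dvd[OF lead_coeff_cyclotomic_poly[OF assms(1)]])
  show "map_poly of_int (cyclotomic_poly n) dvd (map_poly of_int f :: complex poly)"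
    unfolding map_poly_of_int_cyclotomic_poly[OF assms(1)] complex_cyclotomic_poly_def
    using assms by (intro prod_linear_factors_dvd finite_primitive_roots_unity)
qed

section \<open>Products over increasing pairs\<close>

definition increasing_pairs :: "nat \<Rightarrow> (nat \<times> nat) set" where
  "increasing_pairs m = {(s, t). 1 \<le> s \<and> s < t \<and> t \<le> m}"

lemma finite_increasing_pairs [simp]: "finite (increasing_pairs m)"
  by (rule finite_subset[of _ "{1..m} \<times> {1..m}"]) (auto simp: increasing_pairs_def)

lemma increasing_pairs_0 [simp]: "increasing_pairs 0 = {}"
  by (auto simp: increasing_pairs_def)

lemma (in comm_monoid_set) increasing_pairs_Suc:
  "F g (increasing_pairs (Suc m)) = F g (increasing_pairs m) \<^bold>* F (\<lambda>s. g (s, Suc m)) {1..m}"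
proof -
  have "increasing_pairs (Suc m) = increasing_pairs m \<union> (\<lambda>s. (s, Suc m)) ` {1..m}"
    by (auto simp: increasing_pairs_def)
  moreover have "increasing_pairs m \<inter> (\<lambda>s. (s, Suc m)) ` {1..m} = {}"
    by (auto simp: increasing_pairs_def)
  ultimately show ?thesis
    by (simp add: union_disjoint reindex inj_on_def)
qed

lemma card_increasing_pairs: "2 * card (increasing_pairs m) + m = m ^ 2"
proof (induction m)
  case (Suc m)
  have "card (increasing_pairs (Suc m)) = card (increasing_pairs m) + m"
    using sum.increasing_pairs_Suc[of "\<lambda>_. 1::nat" m] by simp
  with Suc.IH show ?case by (simp add: power2_eq_square)
qed simp

lemma sum_increasing_pairs: "2 * (\<Sum>(s, t)\<in>increasing_pairs m. s + t) + m = m ^ 3"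
proof (induction m)
  case (Suc m)
  have "2 * (\<Sum>s = 1..m. s + Suc m) = 3 * m * Suc m"
  proof -
    have "(\<Sum>s = 1..m. s + Suc m) = (\<Sum>s = 1..m. s) + m * Suc m"
      by (simp only: sum.distrib) simp
    then show ?thesis
      using double_gauss_sum_from_Suc_0[of m, where 'a = nat] by simp
  qed
  with Suc.IH show ?case
    by (simp add: sum.increasing_pairs_Suc power3_eq_cube algebra_simps)
qed simp

lemma prod_increasing_pairs_diff:
  "(\<Prod>(s, t)\<in>increasing_pairs m. f (t - s)) = (\<Prod>d = 1..m. f d ^ (m - d))"
proof (induction m)
  case (Suc m)
  have "(\<Prod>s = 1..m. f (Suc m - s)) = (\<Prod>d = 1..m. f d)"
    by (rule prod.reindex_bij_witness[of _ "\<lambda>d. Suc m - d" "\<lambda>s. Suc m - s"]) auto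
  then have "(\<Prod>(s, t)\<in>increasing_pairs (Suc m). f (t - s))
      = (\<Prod>d = 1..m. f d ^ (m - d) * f d)"
    by (simp add: prod.increasing_pairs_Suc Suc.IH prod.distrib)
  also have "\<dots> = (\<Prod>d = 1..Suc m. f d ^ (Suc m - d))"
    by (simp add: prod.nat_ivl_Suc' Suc_diff_le mult.commute)
  finally show ?case .
qed simp

section \<open>The pair product at a primitive root of unity\<close>

lemma prod_roots_unity_differences:
  fixes a :: complex
  assumes "n > 0" and "a ^ n = 1"
  shows "(\<Prod>z\<in>{z. z ^ n = 1} - {a}. a - z) = of_nat n * a ^ (n - 1)"
proof -
  define Q where "Q = (\<Prod>z\<in>{z::complex. z ^ n = 1} - {a}. [:-z, 1:])"
  have "monom 1 n - 1 = [:-a, 1:] * Q"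
    using assms prod.remove[of "{z::complex. z ^ n = 1}" a "\<lambda>z. [:-z, 1:]"]
    by (simp add: Q_def finite_roots_unity prod_roots_unity_linear_factors)
  then have "pderiv (monom 1 n - 1) = [:-a, 1:] * pderiv Q + Q * pderiv [:-a, 1:]"
    by (simp only: pderiv_mult)
  then have "poly (pderiv (monom 1 n - 1)) a = poly Q a"
    by (simp add: pderiv_pCons)
  then show ?thesis
    by (simp add: Q_def poly_prod pderiv_monom pderiv_diff poly_monom)
qed

lemma bij_betw_powers_primitive_root_unity:
  assumes "\<omega> \<in> primitive_roots_unity m" and "m > 0"
  shows "bij_betw (\<lambda>s. \<omega> ^ s) {1..m} {z. z ^ m = 1}"
proof -
  have \<omega>: "\<omega> ^ j = 1 \<longleftrightarrow> m dvd j" for j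
    using assms(1) by (rule primitive_root_unity_power_eq_1)
  then have "\<omega> \<noteq> 0"
    using assms(2) by (metis dvd_refl power_0_left zero_neq_one not_gr0)
  have "s = s'" if "s \<le> s'" "s' \<le> m" "1 \<le> s" "\<omega> ^ s = \<omega> ^ s'" for s s'
  proof -
    have "\<omega> ^ s * \<omega> ^ (s' - s) = \<omega> ^ s * 1"
      using that(1,4) by (metis le_add_diff_inverse mult_1_right power_add)
    then have "m dvd s' - s"
      using \<omega> \<open>\<omega> \<noteq> 0\<close> by (simp del: mult_1_right)
    moreover have "s' - s < m"
      using that by linarith
    ultimately show "s = s'"
      using \<open>s \<le> s'\<close> by (metis gr0I nat_dvd_not_less diff_is_0_eq le_antisym)
  qed
  then have inj: "inj_on (\<lambda>s. \<omega> ^ s) {1..m}"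
    by (intro inj_onI) (metis atLeastAtMost_iff nat_le_linear)
  have "(\<lambda>s. \<omega> ^ s) ` {1..m} = {z. z ^ m = 1}"
  proof (rule card_subset_eq)
    show "finite {z::complex. z ^ m = 1}"
      using assms(2) by (simp add: finite_roots_unity)
    show "(\<lambda>s. \<omega> ^ s) ` {1..m} \<subseteq> {z. z ^ m = 1}"
      using \<omega> by (auto simp flip: power_mult simp: mult.commute)
    show "card ((\<lambda>s. \<omega> ^ s) ` {1..m}) = card {z::complex. z ^ m = 1}"
      using assms(2) card_image[OF inj] by (simp add: card_roots_unity_eq)
  qed
  with inj show ?thesis
    by (simp add: bij_betw_def)
qed

lemma norm_primitive_root_unity:
  "z \<in> primitive_roots_unity n \<Longrightarrow> n > 0 \<Longrightarrow> norm z = 1"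
  using power_eq_1_iff[of z n] by (simp add: primitive_root_unity_power_eq_1)

lemma norm_prod_increasing_pairs_primitive_root:
  assumes "\<omega> \<in> primitive_roots_unity m" and "m > 0"
  shows "(\<Prod>(s, t)\<in>increasing_pairs m. norm (\<omega> ^ t - \<omega> ^ s)) ^ 2 = real m ^ m"
proof -
  let ?R = "{z::complex. z ^ m = 1}"
  let ?N = "\<lambda>(s, t). norm (\<omega> ^ t - \<omega> ^ s)"
  have bij: "bij_betw (\<lambda>s. \<omega> ^ s) {1..m} ?R"
    by (rule bij_betw_powers_primitive_root_unity[OF assms])
  have row: "(\<Prod>s\<in>{1..m} - {t}. norm (\<omega> ^ t - \<omega> ^ s)) = real m" if "t \<in> {1..m}" for t
  proof -
    have "bij_betw (\<lambda>s. \<omega> ^ s) ({1..m} - {t}) (?R - {\<omega> ^ t})"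
      using bij that by (intro bij_betw_DiffI) (auto simp: bij_betw_def)
    then have "(\<Prod>s\<in>{1..m} - {t}. norm (\<omega> ^ t - \<omega> ^ s)) = norm (\<Prod>z\<in>?R - {\<omega> ^ t}. \<omega> ^ t - z)"
      by (simp add: prod_norm prod.reindex_bij_betw)
    also have "\<dots> = real m"
      using assms norm_primitive_root_unity[OF assms]
      by (simp add: prod_roots_unity_differences norm_mult norm_power
          primitive_root_unity_power_eq_1 flip: power_mult)
    finally show ?thesis .
  qed
  have "(\<Prod>p\<in>increasing_pairs m. ?N p) ^ 2
      = (\<Prod>p\<in>increasing_pairs m. ?N p) * (\<Prod>p\<in>prod.swap ` increasing_pairs m. ?N p)"
    by (simp add: power2_eq_square prod.reindex norm_minus_commute case_prod_unfold)
  also have "\<dots> = (\<Prod>p\<in>increasing_pairs m \<union> prod.swap ` increasing_pairs m. ?N p)"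
    by (intro prod.union_disjoint[symmetric] finite_increasing_pairs finite_imageI)
       (auto simp: increasing_pairs_def)
  also have "increasing_pairs m \<union> prod.swap ` increasing_pairs m = (SIGMA t:{1..m}. {1..m} - {t})"
    by (auto simp: increasing_pairs_def)
  also have "(\<Prod>p\<in>(SIGMA t:{1..m}. {1..m} - {t}). ?N p)
      = (\<Prod>t = 1..m. \<Prod>s\<in>{1..m} - {t}. norm (\<omega> ^ t - \<omega> ^ s))"
    by (subst prod.Sigma) (auto simp: norm_minus_commute)
  also have "\<dots> = real m ^ m"
    using row by simp
  finally show ?thesis by (simp add: case_prod_unfold)
qed

lemma cis_power_double_diff:
  assumes "s \<le> t"
  shows "cis \<theta> ^ (2 * t) - cis \<theta> ^ (2 * s)
    = cis \<theta> ^ (s + t) * (2 * \<i> * of_real (sin (\<theta> * real (t - s))))"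
proof -
  have "2 * \<i> * of_real (sin x) = cis x - cis (- x)" for x
    by (simp add: complex_eq_iff)
  then have "cis \<theta> ^ (s + t) * (2 * \<i> * of_real (sin (\<theta> * real (t - s))))
      = cis (real (s + t) * \<theta> + \<theta> * real (t - s)) - cis (real (s + t) * \<theta> - \<theta> * real (t - s))"
    by (simp add: DeMoivre right_diff_distrib cis_mult)
  also have "\<dots> = cis \<theta> ^ (2 * t) - cis \<theta> ^ (2 * s)"
    using assms by (simp add: DeMoivre of_nat_diff algebra_simps)
  finally show ?thesis ..
qed

lemma prod_increasing_pairs_cis:
  "(\<Prod>(s, t)\<in>increasing_pairs m. cis \<theta> ^ (2 * t) - cis \<theta> ^ (2 * s))
    = cis \<theta> ^ (\<Sum>(s, t)\<in>increasing_pairs m. s + t) * (2 * \<i>) ^ card (increasing_pairs m)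
      * of_real (\<Prod>(s, t)\<in>increasing_pairs m. sin (\<theta> * real (t - s)))"
proof -
  have "(\<Prod>(s, t)\<in>increasing_pairs m. cis \<theta> ^ (2 * t) - cis \<theta> ^ (2 * s))
      = (\<Prod>(s, t)\<in>increasing_pairs m. cis \<theta> ^ (s + t) * (2 * \<i>) * of_real (sin (\<theta> * real (t - s))))"
    by (intro prod.cong) (auto simp: increasing_pairs_def cis_power_double_diff mult.assoc)
  then show ?thesis
    by (simp add: prod.distrib case_prod_unfold power_sum)
qed

lemma prod_power_nonneg_if_symmetric:
  fixes f :: "nat \<Rightarrow> real"
  assumes "even h" and sym: "\<And>d. d \<le> 2 * h \<Longrightarrow> f (2 * h - d) = f d"
  shows "0 \<le> (\<Prod>d = 1..2 * h. f d ^ (2 * h - d))"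
proof (cases "h = 0")
  case False
  \<comment> \<open>Pairing d with 2h - d leaves f h ^ h times a square.\<close>
  let ?g = "\<lambda>d. f d ^ (2 * h - d)"
  have "{1..2 * h} = insert h ({1..<h} \<union> {h<..2 * h})"
    using False by auto
  then have "(\<Prod>d = 1..2 * h. ?g d) = ?g h * (\<Prod>d\<in>{1..<h} \<union> {h<..2 * h}. ?g d)"
    by (simp only:) (rule prod.insert; simp)
  also have "\<dots> = (\<Prod>d = 1..<h. ?g d) * f h ^ h * (\<Prod>d\<in>{h<..2 * h}. ?g d)"
    by (subst prod.union_disjoint) (auto simp: mult_2)
  also have "(\<Prod>d\<in>{h<..2 * h}. ?g d) = (\<Prod>e = 0..<h. f e ^ e)"
    using sym by (intro prod.reindex_bij_witness[of _ "\<lambda>e. 2 * h - e" "\<lambda>d. 2 * h - d"]) auto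
  also have "\<dots> = (\<Prod>e = 1..<h. f e ^ e)"
    using False by (simp add: prod.atLeast_Suc_lessThan)
  also have "(\<Prod>d = 1..<h. f d ^ (2 * h - d)) * f h ^ h * (\<Prod>e = 1..<h. f e ^ e)
      = f h ^ h * (\<Prod>d = 1..<h. (f d ^ h) ^ 2)"
    by (simp add: prod.distrib[symmetric] power_add[symmetric] power_mult[symmetric] mult_ac)
  also have "0 \<le> \<dots>"
    using \<open>even h\<close> by (simp add: zero_le_even_power prod_nonneg)
  finally show ?thesis .
qed simp

lemma prod_increasing_pairs_sin_nonneg:
  assumes "cis (\<theta> * real m) = -1" and "4 dvd m"
  shows "0 \<le> (\<Prod>(s, t)\<in>increasing_pairs m. sin (\<theta> * real (t - s)))"
proof -
  obtain k where m: "m = 2 * (2 * k)"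
    using assms(2) by (auto elim!: dvdE)
  from assms(1) have "cos (\<theta> * real m) = -1" "sin (\<theta> * real m) = 0"
    by (simp_all add: complex_eq_iff)
  then have "sin (\<theta> * real (m - d)) = sin (\<theta> * real d)" if "d \<le> m" for d
    using that by (simp add: of_nat_diff right_diff_distrib sin_diff)
  then show ?thesis
    unfolding prod_increasing_pairs_diff[of "\<lambda>d. sin (\<theta> * real d)"] m
    by (intro prod_power_nonneg_if_symmetric) (simp_all add: m)
qed

lemma primitive_root_unity_double_half_power:
  assumes "\<zeta> \<in> primitive_roots_unity (2 * m)" and "m > 0"
  shows "\<zeta> ^ m = -1"
proof -
  have "(\<zeta> ^ m) ^ 2 = 1" "\<zeta> ^ m \<noteq> 1"
    using assms by (simp_all add: primitive_root_unity_power_eq_1 flip: power_mult)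
  then show ?thesis
    by (simp add: power2_eq_1_iff)
qed

lemma primitive_root_unity_double_square:
  assumes "\<zeta> \<in> primitive_roots_unity (2 * m)"
  shows "\<zeta> ^ 2 \<in> primitive_roots_unity m"
proof -
  have "(\<zeta> ^ 2) ^ j = 1 \<longleftrightarrow> m dvd j" for j
    using assms by (simp add: primitive_root_unity_power_eq_1 flip: power_mult)
  then show ?thesis
    by (simp add: primitive_roots_unity_def)
qed

lemma prod_increasing_pairs_primitive_root_double:
  assumes "\<zeta> \<in> primitive_roots_unity (2 * m)" and "m > 0" and "4 dvd m"
  shows "(\<Prod>(s, t)\<in>increasing_pairs m. \<zeta> ^ (2 * t) - \<zeta> ^ (2 * s))
    = \<zeta> ^ (\<Sum>(s, t)\<in>increasing_pairs m. s + t) * \<i> ^ card (increasing_pairs m)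
      * of_nat m ^ (m div 2)"
proof -
  define F where "F = (\<Prod>(s, t)\<in>increasing_pairs m. \<zeta> ^ (2 * t) - \<zeta> ^ (2 * s))"
  define c where "c = card (increasing_pairs m)"
  define R where "R = (\<Prod>(s, t)\<in>increasing_pairs m. sin (Arg \<zeta> * real (t - s)))"
  have "norm \<zeta> = 1"
    using norm_primitive_root_unity[OF assms(1)] assms(2) by simp
  then have "\<zeta> \<noteq> 0"
    by auto
  with \<open>norm \<zeta> = 1\<close> have cis_Arg_\<zeta>: "cis (Arg \<zeta>) = \<zeta>"
    by (simp add: cis_Arg sgn_div_norm)
  have F: "F = \<zeta> ^ (\<Sum>(s, t)\<in>increasing_pairs m. s + t) * (2 * \<i>) ^ c * of_real R"
    using prod_increasing_pairs_cis[where m = m and \<theta> = "Arg \<zeta>"]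
    by (simp add: F_def c_def R_def cis_Arg_\<zeta>)
  have "cis (Arg \<zeta> * real m) = \<zeta> ^ m"
    by (simp only: DeMoivre[of "Arg \<zeta>" m, unfolded cis_Arg_\<zeta>] mult.commute)
  then have "0 \<le> R"
    unfolding R_def using assms primitive_root_unity_double_half_power
    by (intro prod_increasing_pairs_sin_nonneg) simp_all
  \<comment> \<open>Since R \<ge> 0, only the modulus of F is left to determine.\<close>
  then have "norm F = 2 ^ c * R"
    using \<open>norm \<zeta> = 1\<close> by (simp add: F norm_mult norm_power)
  moreover have "norm F = real m ^ (m div 2)"
  proof (rule power2_eq_imp_eq)
    have "(\<Prod>(s, t)\<in>increasing_pairs m. norm ((\<zeta> ^ 2) ^ t - (\<zeta> ^ 2) ^ s)) ^ 2 = real m ^ m"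
      using assms by (intro norm_prod_increasing_pairs_primitive_root primitive_root_unity_double_square)
    moreover have "real m ^ m = (real m ^ (m div 2)) ^ 2"
    proof -
      have "m div 2 * 2 = m"
        using \<open>4 dvd m\<close> by (auto elim!: dvdE)
      then show ?thesis
        by (metis power_mult)
    qed
    ultimately show "norm F ^ 2 = (real m ^ (m div 2)) ^ 2"
      by (simp add: F_def prod_norm case_prod_unfold flip: power_mult)
  qed simp_all
  ultimately have "of_real (2 ^ c * R) = (of_nat m ^ (m div 2) :: complex)"
    by (metis of_real_of_nat_eq of_real_power)
  then show ?thesis
    by (simp add: F[unfolded F_def] c_def power_mult_distrib mult.assoc)
qed

lemma power_sum_increasing_pairs_4:
  fixes \<zeta> :: "'a::comm_ring_1"
  assumes "\<zeta> ^ (4 * a) = -1"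
  shows "\<zeta> ^ (\<Sum>(s, t)\<in>increasing_pairs (4 * a). s + t) = - (\<zeta> ^ (2 * a))"
proof -
  define S where "S = (\<Sum>(s, t)\<in>increasing_pairs (4 * a). s + t)"
  have "2 * S + 4 * a = (4 * a) ^ 3"
    unfolding S_def by (rule sum_increasing_pairs)
  then have "S + 2 * a = 4 * a * (8 * a ^ 2)"
    by (simp add: power_def)
  then have "\<zeta> ^ S * \<zeta> ^ (2 * a) = (\<zeta> ^ (4 * a)) ^ (8 * a ^ 2)"
    by (simp only: power_mult[symmetric] power_add[symmetric])
  then have S: "\<zeta> ^ S * \<zeta> ^ (2 * a) = 1"
    using assms by simp
  have "\<zeta> ^ (2 * a) * \<zeta> ^ (2 * a) = -1"
    using assms by (simp flip: power_add)
  then have "\<zeta> ^ S = - (\<zeta> ^ S * \<zeta> ^ (2 * a) * \<zeta> ^ (2 * a))"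
    by (simp add: mult.assoc)
  then show ?thesis
    unfolding S_def[symmetric] by (simp only: S mult_1)
qed

lemma i_power_card_increasing_pairs_4: "\<i> ^ card (increasing_pairs (4 * a)) = (-1) ^ a"
proof -
  define c where "c = card (increasing_pairs (4 * a))"
  have "2 * c + 4 * a = (4 * a) ^ 2"
    unfolding c_def by (rule card_increasing_pairs)
  then have "c + 2 * a = 4 * (2 * a ^ 2)"
    by (simp add: power2_eq_square)
  have "\<i> ^ c * (-1) ^ a = \<i> ^ (c + 2 * a)"
    by (simp add: power_add power_mult)
  also have "\<dots> = 1"
    using \<open>c + 2 * a = 4 * (2 * a ^ 2)\<close> by (simp only: power_mult) simp
  finally have i: "\<i> ^ c * (-1) ^ a = 1" .
  have "\<i> ^ c = \<i> ^ c * (-1) ^ a * (-1) ^ a"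
    by (simp add: mult.assoc flip: power_add)
  then show ?thesis
    unfolding c_def[symmetric] by (simp only: i mult_1)
qed

lemma prod_increasing_pairs_primitive_root:
  assumes "\<zeta> \<in> primitive_roots_unity (8 * a)" and "a > 0"
  shows "(\<Prod>(s, t)\<in>increasing_pairs (4 * a). \<zeta> ^ (2 * t) - \<zeta> ^ (2 * s))
    = (-1) ^ (a + 1) * of_nat (4 * a) ^ (2 * a) * \<zeta> ^ (2 * a)"
proof -
  have "\<zeta> \<in> primitive_roots_unity (2 * (4 * a))"
    using assms(1) by simp
  moreover from this have "\<zeta> ^ (4 * a) = -1"
    using assms(2) by (intro primitive_root_unity_double_half_power) simp_all
  ultimately show ?thesis
    using assms(2)
    by (simp add: prod_increasing_pairs_primitive_root_double power_sum_increasing_pairs_4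
        i_power_card_increasing_pairs_4)
qed

lemma cyclotomic_poly_dvd_pair_product_minus_monom:
  assumes "a > 0"
  shows "cyclotomic_poly (8 * a) dvd
    (\<Prod>(s, t)\<in>increasing_pairs (4 * a). monom (1::int) (2 * t) - monom 1 (2 * s))
     - smult ((-1) ^ (a + 1) * int (4 * a) ^ (2 * a)) (monom 1 (2 * a))"
proof (rule cyclotomic_poly_dvdI)
  fix z assume "z \<in> primitive_roots_unity (8 * a)"
  then show "poly (map_poly of_int
      ((\<Prod>(s, t)\<in>increasing_pairs (4 * a). monom (1::int) (2 * t) - monom 1 (2 * s))
       - smult ((-1) ^ (a + 1) * int (4 * a) ^ (2 * a)) (monom 1 (2 * a)))) z = 0"
    using assms
    by (simp add: map_poly_of_int_prod poly_prod poly_monom case_prod_unfold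
        prod_increasing_pairs_primitive_root[unfolded case_prod_unfold])
qed (use assms in simp)

theorem lemma2p5:
  fixes p :: nat
  assumes "prime p" and "odd p"
  shows "cyclotomic_poly (p^2 - 1) dvd
    ((\<Prod>(s, t)\<in>{(s, t). 1 \<le> s \<and> s < t \<and> t \<le> (p^2 - 1) div 2}.
        (monom (1::int) (2 * t) - monom 1 (2 * s)))
     - smult ((-1) ^ ((p^2 + 7) div 8) * (int ((p^2 - 1) div 2)) ^ ((p^2 - 1) div 4))
         (monom 1 ((p^2 - 1) div 4)))"
proof -
  obtain b where p: "p = 2 * b + 1"
    using \<open>odd p\<close> by (elim oddE)
  with \<open>prime p\<close> have "b > 0"
    by (auto intro: Nat.gr0I)
  have "even (b * (b + 1))"
    by simp
  then obtain a where a: "b * (b + 1) = 2 * a"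
    by (elim evenE)
  with \<open>b > 0\<close> have "a > 0"
    by (intro Nat.gr0I) simp
  have "p^2 - 1 = 8 * a" "(p^2 + 7) div 8 = a + 1"
    using a by (simp_all add: p power2_eq_square algebra_simps)
  then show ?thesis
    using cyclotomic_poly_dvd_pair_product_minus_monom[OF \<open>a > 0\<close>]
    by (simp add: increasing_pairs_def)
qed

end
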